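(* Let $d_1<d_2<d_3$ be positive integers with $\gcd(d_1,d_2,d_3)=1$ forming a minimal generating set. Let $r=r(N)$ satisfy $r(N)\to\infty$ and $r(N)/N\to0$ as $N\to\infty$. Let $\mathbb M_{N,r}$ be the set of integer vectors $\mathbf e=(Nd_1+j_1,Nd_2+j_2,Nd_3+j_3)$ with $-r\le j_i\le r$, $\gcd(e_1,e_2,e_3)=1$, and $\{e_1,e_2,e_3\}$ a minimal generating set. Define $$K_{N,r}=\frac{\sum_{\mathbf e\in\mathbb M_{N,r}} C(\mathbf e)}{\sum_{\mathbf e\in\mathbb M_{N,r}}\sqrt{e_1e_2e_3}}.$$ Then $\liminf_{N\to\infty}K_{N,r(N)}\ge\sqrt3$. In particular the conjectured value $g_3=\sqrt{2}$ (for which $\lim K_{N,r}$ would equal $\sqrt{2!}$) is not the limit.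
   Context: $\mathsf S(e_1,e_2,e_3)=\{c_1e_1+c_2e_2+c_3e_3: c_i\in\mathbb Z_{\ge0}\}$. The conductor $C(\mathbf e)$ is the smallest integer $s$ such that every integer $\ge s$ lies in $\mathsf S(e_1,e_2,e_3)$. A set of positive integers is a minimal generating set if no element is a nonnegative integer combination of the others. *)

theory Defs
  imports "HOL-Analysis.Analysis" "HOL-Library.Liminf_Limsup"
begin

definition semigroup3 :: "int \<Rightarrow> int \<Rightarrow> int \<Rightarrow> int set" where
  "semigroup3 e1 e2 e3 =
     {c1 * e1 + c2 * e2 + c3 * e3 | c1 c2 c3. c1 \<ge> 0 \<and> c2 \<ge> 0 \<and> c3 \<ge> 0}"

definition conductor3 :: "int \<Rightarrow> int \<Rightarrow> int \<Rightarrow> int" where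
  "conductor3 e1 e2 e3 = (LEAST s. \<forall>n\<ge>s. n \<in> semigroup3 e1 e2 e3)"

definition min_gen_set :: "int set \<Rightarrow> bool" where
  "min_gen_set A \<longleftrightarrow> finite A \<and> (\<forall>a\<in>A. a > 0) \<and>
     (\<forall>a\<in>A. \<not> (\<exists>c. (\<forall>b\<in>A - {a}. c b \<ge> (0::int)) \<and> a = (\<Sum>b\<in>A - {a}. c b * b)))"

definition MNr :: "int \<Rightarrow> int \<Rightarrow> int \<Rightarrow> nat \<Rightarrow> real \<Rightarrow> (int \<times> int \<times> int) set" where
  "MNr d1 d2 d3 N r =
     {(e1, e2, e3) | e1 e2 e3.
        \<bar>real_of_int (e1 - int N * d1)\<bar> \<le> r \<and>
        \<bar>real_of_int (e2 - int N * d2)\<bar> \<le> r \<and>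
        \<bar>real_of_int (e3 - int N * d3)\<bar> \<le> r \<and>
        gcd e1 (gcd e2 e3) = 1 \<and> min_gen_set {e1, e2, e3}}"

definition KNr :: "int \<Rightarrow> int \<Rightarrow> int \<Rightarrow> nat \<Rightarrow> real \<Rightarrow> real" where
  "KNr d1 d2 d3 N r =
     (\<Sum>(e1, e2, e3)\<in>MNr d1 d2 d3 N r. real_of_int (conductor3 e1 e2 e3)) /
     (\<Sum>(e1, e2, e3)\<in>MNr d1 d2 d3 N r. sqrt (real_of_int (e1 * e2 * e3)))"

end

theory Submission
  imports Defs
begin

text \<open>
  Let every residue class modulo \<open>a\<close> contain a number \<open>b y + c z \<le> M\<close> with \<open>y, z \<ge> 0\<close>.
  Choose in each class the representation \<open>(y, z)\<close> that is least by value and then by \<open>y\<close>.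
  The chosen points are closed under going down and left.  If \<open>(Y, 0)\<close> and \<open>(0, Z)\<close> are the
  first points on the axes that are not chosen, their classes are represented by chosen points
  \<open>(0, z\<^sub>1)\<close> and \<open>(y\<^sub>2, 0)\<close>; then \<open>(Y - y\<^sub>2, Z - z\<^sub>1)\<close> lies in the class of \<open>(0, 0)\<close>, and the
  chosen points form exactly the rectangle \<open>[0, Y) \<times> [0, Z)\<close> minus the corner
  \<open>[Y - y\<^sub>2, Y) \<times> [Z - z\<^sub>1, Z)\<close>.
  This L-shape has one point per class, so \<open>a \<le> Y Z - y\<^sub>2 z\<^sub>1\<close>, while its two outer corners
  have value at most \<open>M\<close>; an elementary quadratic inequality turns this into
  \<open>3 a b c \<le> (M + b + c)\<^sup>2\<close>.

  For \<open>a = e\<^sub>1\<close> and \<open>M = C(e) + e\<^sub>1 - 1\<close> this gives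
  \<open>C(e) \<ge> \<surd>(3 e\<^sub>1 e\<^sub>2 e\<^sub>3) - (e\<^sub>1 + e\<^sub>2 + e\<^sub>3)\<close>, and on \<open>M\<^sub>N\<^sub>,\<^sub>r\<close> the linear term is
  \<open>O(N)\<close> against \<open>\<surd>(e\<^sub>1 e\<^sub>2 e\<^sub>3) \<sim> N\<^sup>3\<^sup>/\<^sup>2\<close>.  Finally \<open>M\<^sub>N\<^sub>,\<^sub>r\<close> is nonempty for large \<open>N\<close>:
  shifting \<open>N d\<^sub>1, N d\<^sub>2\<close> by a fixed Bezout correction makes them coprime, and a perturbation
  of size \<open>o(N)\<close> keeps the generating set minimal.
\<close>

section \<open>The L-shaped set of least representations\<close>

lemma three_mul_le_square:
  fixes m n P Q T :: int
  assumes "0 \<le> m" "m \<le> n" "m \<le> P" "0 \<le> Q" "P + Q - m \<le> T"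
  shows "3 * (P * Q - m * n) \<le> T\<^sup>2"
proof -
  have "m * m \<le> m * n"
    using assms(2,1) by (rule mult_left_mono)
  then have "12 * (P * Q - m * n) \<le> 12 * (P * Q - m * m)"
    by simp
  also have "\<dots> \<le> 4 * (P + Q - m)\<^sup>2"
  proof -
    have "4 * (P + Q - m)\<^sup>2 - 12 * (P * Q - m * m) = (P + Q - 4 * m)\<^sup>2 + 3 * (P - Q)\<^sup>2"
      by (simp add: power2_eq_square algebra_simps)
    moreover have "0 \<le> (P + Q - 4 * m)\<^sup>2 + 3 * (P - Q)\<^sup>2"
      by simp
    ultimately show ?thesis
      by linarith
  qed
  also have "\<dots> \<le> 4 * T\<^sup>2"
    using assms by (simp add: power_mono)
  finally show ?thesis
    by simp
qed

locale residue_cover =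
  fixes a b c M :: int
  assumes a_pos: "0 < a" and b_pos: "0 < b" and c_pos: "0 < c"
    and covers: "\<And>n. \<exists>(y::nat) (z::nat). (b * y + c * z) mod a = n mod a \<and> b * y + c * z \<le> M"
begin

definition val :: "nat \<Rightarrow> nat \<Rightarrow> int" where
  "val y z = b * y + c * z"

definition precedes :: "nat \<Rightarrow> nat \<Rightarrow> nat \<Rightarrow> nat \<Rightarrow> bool" where
  "precedes y z y' z' \<longleftrightarrow> val y z < val y' z' \<or> (val y z = val y' z' \<and> y < y')"

definition least_in_class :: "nat \<Rightarrow> nat \<Rightarrow> bool" where
  "least_in_class y z \<longleftrightarrow> (\<forall>y' z'. val y' z' mod a = val y z mod a \<longrightarrow> \<not> precedes y' z' y z)"

lemma val_nonneg: "0 \<le> val y z"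
  using b_pos c_pos by (simp add: val_def)

lemma le_val: "int y + int z \<le> val y z"
proof -
  have "1 * int y \<le> b * int y" "1 * int z \<le> c * int z"
    using b_pos c_pos by (intro mult_right_mono; simp)+
  then show ?thesis
    by (simp add: val_def)
qed

lemma val_add: "val (y + s) (z + t) = val y z + val s t"
  by (simp add: val_def algebra_simps)

lemma precedes_add_iff: "precedes (y + s) (z + t) (y' + s) (z' + t) \<longleftrightarrow> precedes y z y' z'"
  by (auto simp: precedes_def val_add)

lemma same_class_add_iff:
  "val (y + s) (z + t) mod a = val (y' + s) (z' + t) mod a \<longleftrightarrow> val y z mod a = val y' z' mod a"
  by (simp add: val_add mod_eq_dvd_iff)

lemma precedes_total: "(y, z) \<noteq> (y', z') \<Longrightarrow> precedes y z y' z' \<or> precedes y' z' y z"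
  using c_pos by (cases "y = y'") (auto simp: precedes_def val_def)

lemma wf_precedes: "wf {((y, z), (y', z')). precedes y z y' z'}"
proof (rule wf_subset)
  show "wf (measures [\<lambda>(y, z). nat (val y z), fst])"
    by simp
  show "{((y, z), (y', z')). precedes y z y' z'} \<subseteq> measures [\<lambda>(y, z). nat (val y z), fst]"
  proof clarify
    fix y z y' z'
    assume "precedes y z y' z'"
    then show "((y, z), (y', z')) \<in> measures [\<lambda>(y, z). nat (val y z), fst]"
      using val_nonneg[of y z] val_nonneg[of y' z'] by (auto simp: precedes_def)
  qed
qed

lemma least_in_class_exists: "\<exists>y' z'. least_in_class y' z' \<and> val y' z' mod a = val y z mod a"
proof -
  define Q where "Q = {(y', z'). val y' z' mod a = val y z mod a}"
  define R where "R = {((y, z), (y', z')). precedes y z y' z'}"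
  have "(y, z) \<in> Q"
    by (simp add: Q_def)
  then obtain p where p: "p \<in> Q" and min: "\<And>q. (q, p) \<in> R \<Longrightarrow> q \<notin> Q"
    using wfE_min[OF wf_precedes[folded R_def]] by blast
  obtain y' z' where p_eq: "p = (y', z')"
    by (cases p)
  have "least_in_class y' z'"
    unfolding least_in_class_def
  proof (intro allI impI notI)
    fix u v
    assume "val u v mod a = val y' z' mod a" "precedes u v y' z'"
    then show False
      using p min[of "(u, v)"] unfolding p_eq Q_def R_def by simp
  qed
  with p show ?thesis
    unfolding p_eq Q_def by auto
qed

lemma not_least_in_class:
  assumes "\<not> least_in_class y z"
  obtains p q where "least_in_class p q" "val p q mod a = val y z mod a" "precedes p q y z"
proof -
  obtain p q where pq: "least_in_class p q" "val p q mod a = val y z mod a"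
    using least_in_class_exists by blast
  with assms have "(p, q) \<noteq> (y, z)"
    by auto
  moreover have "\<not> precedes y z p q"
    using pq unfolding least_in_class_def by simp
  ultimately have "precedes p q y z"
    using precedes_total by blast
  with pq that show thesis
    by blast
qed

lemma least_in_class_downward:
  assumes "least_in_class y z" "y' \<le> y" "z' \<le> z"
  shows "least_in_class y' z'"
proof (rule ccontr)
  obtain s t where st: "y = y' + s" "z = z' + t"
    using le_Suc_ex[OF assms(2)] le_Suc_ex[OF assms(3)] by blast
  assume "\<not> least_in_class y' z'"
  then obtain p q where "val p q mod a = val y' z' mod a" "precedes p q y' z'"
    using not_least_in_class by blast
  then have "val (p + s) (q + t) mod a = val y z mod a" "precedes (p + s) (q + t) y z"
    unfolding st same_class_add_iff precedes_add_iff .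
  with assms(1) show False
    unfolding least_in_class_def by blast
qed

lemma least_in_class_unique:
  assumes "least_in_class y z" "least_in_class y' z'" "val y z mod a = val y' z' mod a"
  shows "y = y' \<and> z = z'"
proof (rule ccontr)
  assume "\<not> (y = y' \<and> z = z')"
  then have "precedes y z y' z' \<or> precedes y' z' y z"
    using precedes_total by blast
  with assms show False
    unfolding least_in_class_def by auto
qed

lemma least_in_class_val_le:
  assumes "least_in_class y z"
  shows "val y z \<le> M"
proof -
  obtain y' z' where y'z': "val y' z' mod a = val y z mod a" "val y' z' \<le> M"
    using covers[of "val y z"] unfolding val_def by blast
  with assms have "\<not> precedes y' z' y z"
    unfolding least_in_class_def by blast
  with y'z'(2) show ?thesis
    unfolding precedes_def by linarith
qed

lemma least_in_class_0_0: "least_in_class 0 0"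
proof -
  have "val 0 0 = 0"
    by (simp add: val_def)
  then have "\<not> precedes y z 0 0" for y z
    using val_nonneg[of y z] unfolding precedes_def by simp
  then show ?thesis
    unfolding least_in_class_def by blast
qed

lemma M_nonneg: "0 \<le> M"
  using least_in_class_val_le[OF least_in_class_0_0] by (simp add: val_def)

definition Y :: nat where
  "Y = (LEAST y. \<not> least_in_class y 0)"

definition Z :: nat where
  "Z = (LEAST z. \<not> least_in_class 0 z)"

lemma not_least_in_class_large: "nat M < y + z \<Longrightarrow> \<not> least_in_class y z"
  using least_in_class_val_le[of y z] le_val[of y z] M_nonneg by linarith

lemma not_least_in_class_Y: "\<not> least_in_class Y 0"
  unfolding Y_def by (rule LeastI[of _ "nat M + 1"]) (simp add: not_least_in_class_large)

lemma least_in_class_below_Y: "y < Y \<Longrightarrow> least_in_class y 0"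
  unfolding Y_def using not_less_Least by blast

lemma Y_pos: "0 < Y"
  using not_least_in_class_Y least_in_class_0_0 by (cases Y) auto

lemma not_least_in_class_Z: "\<not> least_in_class 0 Z"
  unfolding Z_def by (rule LeastI[of _ "nat M + 1"]) (simp add: not_least_in_class_large)

lemma least_in_class_below_Z: "z < Z \<Longrightarrow> least_in_class 0 z"
  unfolding Z_def using not_less_Least by blast

lemma Z_pos: "0 < Z"
  using not_least_in_class_Z least_in_class_0_0 by (cases Z) auto

lemma least_in_class_lt_Y_Z:
  assumes "least_in_class y z"
  shows "y < Y" "z < Z"
  using least_in_class_downward[OF assms, of Y 0] least_in_class_downward[OF assms, of 0 Z]
    not_least_in_class_Y not_least_in_class_Z by (meson not_le zero_le)+

lemma Y_class_rep:
  obtains z1 where "least_in_class 0 z1" "val 0 z1 mod a = val Y 0 mod a" "c * z1 \<le> b * Y"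
proof -
  obtain p q where pq: "least_in_class p q" "val p q mod a = val Y 0 mod a" "precedes p q Y 0"
    using not_least_in_class[OF not_least_in_class_Y] by blast
  have "p = 0"
  proof (rule ccontr)
    assume "p \<noteq> 0"
    then obtain p' where p': "p = p' + 1"
      using not0_implies_Suc by auto
    obtain Y' where Y': "Y = Y' + 1"
      using Y_pos not0_implies_Suc by auto
    have "val p' q mod a = val Y' 0 mod a" "precedes p' q Y' 0"
      using pq(2,3) same_class_add_iff[of p' 1 q 0 Y' 0] precedes_add_iff[of p' 1 q 0 Y' 0]
      unfolding p' Y' by simp_all
    then have "\<not> least_in_class Y' 0"
      unfolding least_in_class_def by blast
    with least_in_class_below_Y[of Y'] show False
      unfolding Y' by simp
  qed
  with pq that show thesis
    unfolding precedes_def val_def by auto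
qed

lemma Z_class_rep:
  obtains y2 where "least_in_class y2 0" "val y2 0 mod a = val 0 Z mod a" "b * y2 \<le> c * Z"
proof -
  obtain p q where pq: "least_in_class p q" "val p q mod a = val 0 Z mod a" "precedes p q 0 Z"
    using not_least_in_class[OF not_least_in_class_Z] by blast
  have "q = 0"
  proof (rule ccontr)
    assume "q \<noteq> 0"
    then obtain q' where q': "q = q' + 1"
      using not0_implies_Suc by auto
    obtain Z' where Z': "Z = Z' + 1"
      using Z_pos not0_implies_Suc by auto
    have "val p q' mod a = val 0 Z' mod a" "precedes p q' 0 Z'"
      using pq(2,3) same_class_add_iff[of p 0 q' 1 0 Z'] precedes_add_iff[of p 0 q' 1 0 Z']
      unfolding q' Z' by simp_all
    then have "\<not> least_in_class 0 Z'"
      unfolding least_in_class_def by blast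
    with least_in_class_below_Z[of Z'] show False
      unfolding Z' by simp
  qed
  with pq that show thesis
    unfolding precedes_def val_def by auto
qed

lemma axes_no_period:
  assumes "y < Y" "z < Z" "val y 0 mod a = val 0 z mod a"
  shows "y = 0 \<and> z = 0"
  using least_in_class_unique[OF least_in_class_below_Y least_in_class_below_Z] assms by blast

context
  fixes y2 z1 :: nat
  assumes z1_least: "least_in_class 0 z1" and z1_class: "val 0 z1 mod a = val Y 0 mod a"
    and z1_le: "c * z1 \<le> b * Y"
    and y2_least: "least_in_class y2 0" and y2_class: "val y2 0 mod a = val 0 Z mod a"
    and y2_le: "b * y2 \<le> c * Z"
begin

lemma z1_lt_Z: "z1 < Z"
  using least_in_class_lt_Y_Z(2)[OF z1_least] .

lemma y2_lt_Y: "y2 < Y"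
  using least_in_class_lt_Y_Z(1)[OF y2_least] .

lemma a_dvd_Y_z1: "a dvd val Y 0 - val 0 z1"
  using z1_class[symmetric] by (simp add: mod_eq_dvd_iff)

lemma a_dvd_Z_y2: "a dvd val 0 Z - val y2 0"
  using y2_class[symmetric] by (simp add: mod_eq_dvd_iff)

definition L_shape :: "(nat \<times> nat) set" where
  "L_shape = {(y, z). y < Y \<and> z < Z \<and> \<not> (Y - y2 \<le> y \<and> Z - z1 \<le> z)}"

lemma corner_not_least_in_class: "\<not> least_in_class (Y - y2) (Z - z1)"
proof -
  have "val (Y - y2) (Z - z1) = (val Y 0 - val 0 z1) + (val 0 Z - val y2 0)"
    using y2_lt_Y z1_lt_Z by (simp add: val_def of_nat_diff algebra_simps)
  then have "val 0 0 mod a = val (Y - y2) (Z - z1) mod a"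
    using a_dvd_Y_z1 a_dvd_Z_y2 by (simp add: val_def mod_eq_dvd_iff)
  moreover have "precedes 0 0 (Y - y2) (Z - z1)"
    using le_val[of "Y - y2" "Z - z1"] y2_lt_Y by (simp add: precedes_def val_def)
  ultimately show ?thesis
    unfolding least_in_class_def by blast
qed

lemma least_in_class_in_L_shape: "least_in_class y z \<Longrightarrow> (y, z) \<in> L_shape"
  using least_in_class_lt_Y_Z least_in_class_downward corner_not_least_in_class
  unfolding L_shape_def by blast

lemma L_shape_no_period:
  assumes L: "(y, z) \<in> L_shape" and dvd: "a dvd val y z"
  shows "y = 0 \<and> z = 0"
proof -
  have "y < Y" "z < Z"
    using L unfolding L_shape_def by auto
  have z_large: "Z \<le> z + z1" if "0 < y"
  proof (rule ccontr)
    assume "\<not> Z \<le> z + z1"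
    have "val (Y - y) 0 - val 0 (z + z1) = (val Y 0 - val 0 z1) - val y z"
      using \<open>y < Y\<close> by (simp add: val_def of_nat_diff algebra_simps)
    then have "val (Y - y) 0 mod a = val 0 (z + z1) mod a"
      using a_dvd_Y_z1 dvd by (simp add: mod_eq_dvd_iff)
    then have "Y - y = 0"
      using axes_no_period[of "Y - y" "z + z1"] \<open>\<not> Z \<le> z + z1\<close> \<open>y < Y\<close> that by simp
    with \<open>y < Y\<close> show False
      by simp
  qed
  have y_large: "Y \<le> y + y2" if "0 < z"
  proof (rule ccontr)
    assume "\<not> Y \<le> y + y2"
    have "val (y + y2) 0 - val 0 (Z - z) = val y z - (val 0 Z - val y2 0)"
      using \<open>z < Z\<close> by (simp add: val_def of_nat_diff algebra_simps)
    then have "val (y + y2) 0 mod a = val 0 (Z - z) mod a"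
      using a_dvd_Z_y2 dvd by (simp add: mod_eq_dvd_iff)
    then have "Z - z = 0"
      using axes_no_period[of "y + y2" "Z - z"] \<open>\<not> Y \<le> y + y2\<close> \<open>z < Z\<close> that by simp
    with \<open>z < Z\<close> show False
      by simp
  qed
  show ?thesis
    using L z_large y_large z1_lt_Z y2_lt_Y unfolding L_shape_def by fastforce
qed

lemma L_shape_downward: "(y, z) \<in> L_shape \<Longrightarrow> y' \<le> y \<Longrightarrow> z' \<le> z \<Longrightarrow> (y', z') \<in> L_shape"
  unfolding L_shape_def by auto

lemma L_shape_inj_le:
  assumes "(y, z) \<in> L_shape" "(y', z') \<in> L_shape" "a dvd val y z - val y' z'" "y' \<le> y"
  shows "y = y' \<and> z = z'"
proof (cases "z' \<le> z")
  case True
  have "(y - y', z - z') \<in> L_shape"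
    using assms(1) L_shape_downward by simp
  moreover have "val (y - y') (z - z') = val y z - val y' z'"
    using assms(4) True by (simp add: val_def of_nat_diff algebra_simps)
  ultimately show ?thesis
    using L_shape_no_period assms(3,4) True by fastforce
next
  case False
  have "y - y' < Y" "z' - z < Z"
    using assms(1,2) unfolding L_shape_def by auto
  moreover have "val (y - y') 0 - val 0 (z' - z) = val y z - val y' z'"
    using assms(4) False by (simp add: val_def of_nat_diff algebra_simps)
  ultimately have "y - y' = 0 \<and> z' - z = 0"
    using axes_no_period[of "y - y'" "z' - z"] assms(3) by (simp add: mod_eq_dvd_iff)
  with False show ?thesis
    by simp
qed

lemma L_shape_inj:
  assumes "(y, z) \<in> L_shape" "(y', z') \<in> L_shape" "val y z mod a = val y' z' mod a"
  shows "y = y' \<and> z = z'"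
proof (cases "y' \<le> y")
  case True
  then show ?thesis
    using L_shape_inj_le assms by (simp add: mod_eq_dvd_iff)
next
  case False
  then show ?thesis
    using L_shape_inj_le[OF assms(2,1)] assms(3) by (simp add: mod_eq_dvd_iff dvd_diff_commute)
qed

lemma L_shape_eq: "L_shape = {(y, z). least_in_class y z}"
proof (intro equalityI subsetI)
  fix p
  assume "p \<in> L_shape"
  moreover obtain y z where p: "p = (y, z)"
    by (cases p)
  moreover obtain y' z' where "least_in_class y' z'" "val y' z' mod a = val y z mod a"
    using least_in_class_exists by blast
  ultimately show "p \<in> {(y, z). least_in_class y z}"
    using L_shape_inj least_in_class_in_L_shape by fastforce
qed (use least_in_class_in_L_shape in blast)

lemma card_L_shape: "card L_shape = Y * Z - y2 * z1"
proof -
  have "L_shape = {..<Y} \<times> {..<Z} - {Y - y2..<Y} \<times> {Z - z1..<Z}"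
    unfolding L_shape_def by auto
  moreover have "{Y - y2..<Y} \<times> {Z - z1..<Z} \<subseteq> {..<Y} \<times> {..<Z}"
    by auto
  ultimately show ?thesis
    using y2_lt_Y z1_lt_Z by (simp add: card_Diff_subset card_cartesian_product)
qed

lemma a_le_card_L_shape: "a \<le> int (card L_shape)"
proof -
  have fin: "finite L_shape"
    by (rule finite_subset[of _ "{..<Y} \<times> {..<Z}"]) (auto simp: L_shape_def)
  have "{0..<a} \<subseteq> (\<lambda>(y, z). val y z mod a) ` L_shape"
  proof
    fix n
    assume n: "n \<in> {0..<a}"
    obtain y0 z0 where "val y0 z0 mod a = n mod a"
      using covers[of n] unfolding val_def by blast
    moreover obtain y z where "least_in_class y z" "val y z mod a = val y0 z0 mod a"
      using least_in_class_exists by blast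
    ultimately show "n \<in> (\<lambda>(y, z). val y z mod a) ` L_shape"
      using n least_in_class_in_L_shape by force
  qed
  then have "card {0..<a} \<le> card L_shape"
    using card_image_le[OF fin] card_mono[OF finite_imageI[OF fin]] by (meson order_trans)
  then show ?thesis
    by simp
qed

lemma L_shape_bound: "3 * a * b * c \<le> (M + b + c)\<^sup>2"
proof -
  define P Q p q where "P = b * Y" and "Q = c * Z" and "p = b * y2" and "q = c * z1"
  have "a * (b * c) \<le> (int Y * int Z - int y2 * int z1) * (b * c)"
    using a_le_card_L_shape card_L_shape y2_lt_Y z1_lt_Z b_pos c_pos
    by (intro mult_right_mono) (simp_all add: of_nat_diff mult_le_mono less_imp_le)
  then have abc: "a * b * c \<le> P * Q - p * q"
    unfolding P_def Q_def p_def q_def by (simp add: algebra_simps)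
  have "(Y - 1, Z - z1 - 1) \<in> L_shape" "(Y - y2 - 1, Z - 1) \<in> L_shape"
    using Y_pos Z_pos y2_lt_Y z1_lt_Z unfolding L_shape_def by auto
  then have "val (Y - 1) (Z - z1 - 1) \<le> M" "val (Y - y2 - 1) (Z - 1) \<le> M"
    using least_in_class_val_le L_shape_eq by auto
  then have "P + Q - q \<le> M + b + c" "P + Q - p \<le> M + b + c"
    using Y_pos Z_pos y2_lt_Y z1_lt_Z
    by (simp_all add: P_def Q_def p_def q_def val_def of_nat_diff algebra_simps)
  moreover have "0 \<le> p" "0 \<le> q" "q \<le> P" "p \<le> Q" "0 \<le> Q"
    using b_pos c_pos z1_le y2_le unfolding P_def Q_def p_def q_def by simp_all
  ultimately have "3 * (P * Q - p * q) \<le> (M + b + c)\<^sup>2"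
    using three_mul_le_square[of p q P Q] three_mul_le_square[of q p P Q]
    by (cases "p \<le> q") (simp_all add: mult.commute)
  with abc show ?thesis
    by simp
qed

end

theorem three_abc_le_square: "3 * a * b * c \<le> (M + b + c)\<^sup>2"
proof -
  obtain z1 where "least_in_class 0 z1" "val 0 z1 mod a = val Y 0 mod a" "c * z1 \<le> b * Y"
    by (rule Y_class_rep)
  moreover obtain y2 where "least_in_class y2 0" "val y2 0 mod a = val 0 Z mod a" "b * y2 \<le> c * Z"
    by (rule Z_class_rep)
  ultimately show ?thesis
    by (rule L_shape_bound)
qed

end

section \<open>A lower bound for the conductor\<close>

lemma mem_semigroup3_iff:
  "n \<in> semigroup3 e1 e2 e3 \<longleftrightarrow>
     (\<exists>c1 c2 c3. 0 \<le> c1 \<and> 0 \<le> c2 \<and> 0 \<le> c3 \<and> n = c1 * e1 + c2 * e2 + c3 * e3)"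
  unfolding semigroup3_def by blast

lemma semigroup3_nonneg:
  assumes "0 < e1" "0 < e2" "0 < e3" "n \<in> semigroup3 e1 e2 e3"
  shows "0 \<le> n"
  using assms by (auto simp: mem_semigroup3_iff)

lemma large_in_semigroup3:
  fixes e1 e2 e3 n :: int
  assumes pos: "0 < e1" "0 < e2" "0 < e3" and gcd: "gcd e1 (gcd e2 e3) = 1"
    and large: "e1 * (e2 + e3) \<le> n"
  shows "n \<in> semigroup3 e1 e2 e3"
proof -
  obtain u v where uv: "u * e2 + v * e3 = gcd e2 e3"
    using bezout_int by blast
  obtain s t where "s * e1 + t * gcd e2 e3 = 1"
    using bezout_int[of e1 "gcd e2 e3"] gcd by auto
  then have one: "s * e1 + (t * u) * e2 + (t * v) * e3 = 1"
    by (simp add: algebra_simps flip: uv)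
  define c2 c3 where "c2 = (n * t * u) mod e1" and "c3 = (n * t * v) mod e1"
  define c1 where "c1 = n * s + (n * t * u) div e1 * e2 + (n * t * v) div e1 * e3"
  have n_eq: "n = c1 * e1 + c2 * e2 + c3 * e3"
  proof -
    have "n = n * s * e1 + (n * t * u) * e2 + (n * t * v) * e3"
      using arg_cong[OF one, of "(*) n"] by (simp add: algebra_simps)
    also have "\<dots> = n * s * e1 + ((n * t * u) div e1 * e1 + c2) * e2 + ((n * t * v) div e1 * e1 + c3) * e3"
      unfolding c2_def c3_def by simp
    also have "\<dots> = c1 * e1 + c2 * e2 + c3 * e3"
      unfolding c1_def by (simp add: algebra_simps)
    finally show ?thesis .
  qed
  have c2: "0 \<le> c2" "c2 < e1" and c3: "0 \<le> c3" "c3 < e1"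
    unfolding c2_def c3_def using pos by simp_all
  have "c2 * e2 \<le> e1 * e2" "c3 * e3 \<le> e1 * e3"
    using c2 c3 pos by (simp_all add: mult_right_mono)
  then have "0 \<le> c1 * e1"
    using n_eq large by (simp add: algebra_simps)
  then have "0 \<le> c1"
    using pos by (simp add: zero_le_mult_iff)
  with n_eq c2 c3 show ?thesis
    unfolding mem_semigroup3_iff by blast
qed

lemma LeastI_int_bounded_below:
  fixes P :: "int \<Rightarrow> bool"
  assumes "P x" and bound: "\<And>s. P s \<Longrightarrow> m \<le> s"
  shows "P (LEAST s. P s)"
proof -
  define k where "k = (LEAST k. P (m + int k))"
  have "P (m + int (nat (x - m)))"
    using assms by simp
  then have Pk: "P (m + int k)"
    unfolding k_def by (rule LeastI)
  have "m + int k \<le> s" if "P s" for s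
  proof -
    have "P (m + int (nat (s - m)))"
      using that bound[OF that] by simp
    then have "k \<le> nat (s - m)"
      unfolding k_def by (rule Least_le)
    then show ?thesis
      using bound[OF that] by linarith
  qed
  with Pk have "(LEAST s. P s) = m + int k"
    by (intro Least_equality) auto
  with Pk show ?thesis
    by simp
qed

lemma ge_conductor3_in_semigroup3:
  assumes pos: "0 < e1" "0 < e2" "0 < e3" and gcd: "gcd e1 (gcd e2 e3) = 1"
    and "conductor3 e1 e2 e3 \<le> n"
  shows "n \<in> semigroup3 e1 e2 e3"
proof -
  let ?P = "\<lambda>s. \<forall>n\<ge>s. n \<in> semigroup3 e1 e2 e3"
  have "?P (e1 * (e2 + e3))"
    using large_in_semigroup3[OF pos gcd] by blast
  moreover have "0 \<le> s" if "?P s" for s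
  proof (rule ccontr)
    assume "\<not> 0 \<le> s"
    with that have "-1 \<in> semigroup3 e1 e2 e3"
      by simp
    with semigroup3_nonneg[OF pos] show False
      by fastforce
  qed
  ultimately have "?P (conductor3 e1 e2 e3)"
    unfolding conductor3_def by (rule LeastI_int_bounded_below)
  with assms(5) show ?thesis
    by blast
qed

theorem conductor3_lower_bound:
  fixes e1 e2 e3 :: int
  assumes pos: "0 < e1" "0 < e2" "0 < e3" and gcd: "gcd e1 (gcd e2 e3) = 1"
  shows "sqrt (3 * real_of_int (e1 * e2 * e3)) \<le> real_of_int (conductor3 e1 e2 e3 + e1 + e2 + e3 - 1)"
proof -
  define C where "C = conductor3 e1 e2 e3"
  have cover: "residue_cover e1 e2 e3 (C + e1 - 1)"
  proof
    fix n
    define n' where "n' = C + (n - C) mod e1"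
    have n'_bounds: "C \<le> n'" "n' \<le> C + e1 - 1" and n'_mod: "n' mod e1 = n mod e1"
      unfolding n'_def using pos by (auto simp: mod_add_right_eq)
    obtain c1 c2 c3 where c: "0 \<le> c1" "0 \<le> c2" "0 \<le> c3" "n' = c1 * e1 + c2 * e2 + c3 * e3"
      using ge_conductor3_in_semigroup3[OF pos gcd n'_bounds(1)[unfolded C_def]]
      unfolding mem_semigroup3_iff by blast
    have rep: "e2 * int (nat c2) + e3 * int (nat c3) = n' - c1 * e1"
      using c by simp
    have "(n' - c1 * e1) mod e1 = n mod e1"
      using n'_mod mod_mult_self1[of n' "- c1" e1] by simp
    moreover have "n' - c1 * e1 \<le> C + e1 - 1"
      using mult_nonneg_nonneg[OF c(1) less_imp_le[OF pos(1)]] n'_bounds(2) by linarith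
    ultimately show "\<exists>(y::nat) (z::nat). (e2 * y + e3 * z) mod e1 = n mod e1 \<and> e2 * y + e3 * z \<le> C + e1 - 1"
      unfolding rep[symmetric] by blast
  qed (use pos in auto)
  define T where "T = C + e1 - 1 + e2 + e3"
  have "3 * (e1 * e2 * e3) \<le> T\<^sup>2"
    using residue_cover.three_abc_le_square[OF cover] unfolding T_def by (simp add: mult.assoc)
  then have "real_of_int (3 * (e1 * e2 * e3)) \<le> real_of_int (T\<^sup>2)"
    by (simp only: of_int_le_iff)
  then have "sqrt (3 * real_of_int (e1 * e2 * e3)) \<le> sqrt ((real_of_int T)\<^sup>2)"
    by (intro real_sqrt_le_mono) simp
  also have "\<dots> = real_of_int T"
    using residue_cover.M_nonneg[OF cover] pos unfolding T_def by simp
  finally show ?thesis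
    unfolding T_def C_def by (simp add: algebra_simps)
qed

section \<open>Perturbing a minimal generating set\<close>

lemma nonneg_comb_pair_iff:
  fixes u w t :: int
  assumes "u \<noteq> w"
  shows "(\<exists>c. (\<forall>b\<in>{u, w}. 0 \<le> c b) \<and> t = (\<Sum>b\<in>{u, w}. c b * b)) \<longleftrightarrow>
         (\<exists>k l. 0 \<le> k \<and> 0 \<le> l \<and> t = k * u + l * w)"
proof
  assume "\<exists>c. (\<forall>b\<in>{u, w}. 0 \<le> c b) \<and> t = (\<Sum>b\<in>{u, w}. c b * b)"
  then show "\<exists>k l. 0 \<le> k \<and> 0 \<le> l \<and> t = k * u + l * w"
    using assms by auto
next
  assume "\<exists>k l. 0 \<le> k \<and> 0 \<le> l \<and> t = k * u + l * w"
  then obtain k l where "0 \<le> k" "0 \<le> l" "t = k * u + l * w"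
    by blast
  then show "\<exists>c. (\<forall>b\<in>{u, w}. 0 \<le> c b) \<and> t = (\<Sum>b\<in>{u, w}. c b * b)"
    using assms by (intro exI[of _ "\<lambda>b. if b = u then k else l"]) auto
qed

lemma nonneg_coeff_eq_0:
  fixes k u t :: int
  assumes "0 \<le> k" "0 < u" "k * u \<le> t" "t < u"
  shows "k = 0"
proof -
  have "k * u < 1 * u"
    using assms(3,4) by simp
  then show ?thesis
    using assms(1,2) mult_less_cancel_right_pos by fastforce
qed

lemma nonneg_comb_ne_smaller:
  fixes k l x y z :: int
  assumes "0 \<le> k" "0 \<le> l" "0 < x" "x < y" "x < z"
  shows "x \<noteq> k * y + l * z"
proof
  assume x_eq: "x = k * y + l * z"
  have "0 \<le> k * y" "0 \<le> l * z"
    using assms by simp_all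
  have "k = 0"
    by (rule nonneg_coeff_eq_0[of k y x]) (use assms x_eq \<open>0 \<le> l * z\<close> in linarith)+
  moreover have "l = 0"
    by (rule nonneg_coeff_eq_0[of l z x]) (use assms x_eq \<open>0 \<le> k * y\<close> in linarith)+
  ultimately show False
    using x_eq assms(3) by simp
qed

lemma min_gen_set_sorted_iff:
  fixes x y z :: int
  assumes "0 < x" "x < y" "y < z"
  shows "min_gen_set {x, y, z} \<longleftrightarrow> (\<forall>k\<ge>0. y \<noteq> k * x) \<and> (\<forall>k\<ge>0. \<forall>l\<ge>0. z \<noteq> k * x + l * y)"
proof -
  define comb where
    "comb t \<longleftrightarrow> (\<exists>c. (\<forall>b\<in>{x, y, z} - {t}. 0 \<le> c b) \<and> t = (\<Sum>b\<in>{x, y, z} - {t}. c b * b))" for t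
  have "{x, y, z} - {x} = {y, z}" "{x, y, z} - {y} = {x, z}" "{x, y, z} - {z} = {x, y}"
    using assms by auto
  then have "comb x \<longleftrightarrow> (\<exists>k l. 0 \<le> k \<and> 0 \<le> l \<and> x = k * y + l * z)"
    "comb y \<longleftrightarrow> (\<exists>k l. 0 \<le> k \<and> 0 \<le> l \<and> y = k * x + l * z)"
    "comb z \<longleftrightarrow> (\<exists>k l. 0 \<le> k \<and> 0 \<le> l \<and> z = k * x + l * y)"
    unfolding comb_def using assms by (simp_all only: nonneg_comb_pair_iff)
  moreover have "min_gen_set {x, y, z} \<longleftrightarrow> \<not> comb x \<and> \<not> comb y \<and> \<not> comb z"
    unfolding min_gen_set_def comb_def[symmetric] using assms by simp
  ultimately have "min_gen_set {x, y, z} \<longleftrightarrow>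
      \<not> (\<exists>k l. 0 \<le> k \<and> 0 \<le> l \<and> x = k * y + l * z) \<and>
      \<not> (\<exists>k l. 0 \<le> k \<and> 0 \<le> l \<and> y = k * x + l * z) \<and>
      \<not> (\<exists>k l. 0 \<le> k \<and> 0 \<le> l \<and> z = k * x + l * y)"
    by simp
  moreover have "\<not> (\<exists>k l. 0 \<le> k \<and> 0 \<le> l \<and> x = k * y + l * z)"
    using nonneg_comb_ne_smaller[of _ _ x y z] assms by auto
  moreover have "(\<exists>k l. 0 \<le> k \<and> 0 \<le> l \<and> y = k * x + l * z) \<longleftrightarrow> (\<exists>k\<ge>0. y = k * x)"
  proof
    assume "\<exists>k l. 0 \<le> k \<and> 0 \<le> l \<and> y = k * x + l * z"
    then obtain k l where kl: "0 \<le> k" "0 \<le> l" "y = k * x + l * z"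
      by blast
    then have "l = 0"
      using assms nonneg_coeff_eq_0[of l z y] by simp
    with kl show "\<exists>k\<ge>0. y = k * x"
      by auto
  next
    assume "\<exists>k\<ge>0. y = k * x"
    then show "\<exists>k l. 0 \<le> k \<and> 0 \<le> l \<and> y = k * x + l * z"
      by (metis add.right_neutral mult_zero_left order_refl)
  qed
  ultimately show ?thesis
    by auto
qed

lemma eq_0_if_abs_mult_lt:
  fixes N w :: int
  assumes "\<bar>N * w\<bar> < N"
  shows "w = 0"
proof (rule ccontr)
  assume "w \<noteq> 0"
  then have "\<bar>N\<bar> * 1 \<le> \<bar>N\<bar> * \<bar>w\<bar>"
    by (intro mult_left_mono) auto
  with assms show False
    by (simp add: abs_mult)
qed

lemma abs_mult_le:
  fixes k K j B :: int
  assumes "0 \<le> k" "k \<le> K" "\<bar>j\<bar> \<le> B"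
  shows "\<bar>k * j\<bar> \<le> K * B"
  using mult_mono[OF assms(2,3)] assms(1,2) by (simp add: abs_mult)

lemma perturbed_sorted:
  fixes d1 d2 d3 e1 e2 e3 B N :: int
  assumes d: "0 < d1" "d1 < d2" "d2 < d3"
    and e: "\<bar>e1 - N * d1\<bar> \<le> B" "\<bar>e2 - N * d2\<bar> \<le> B" "\<bar>e3 - N * d3\<bar> \<le> B"
    and N: "2 * B < N"
  shows "0 < e1" "e1 < e2" "e2 < e3" "N \<le> 2 * e1"
proof -
  have "0 \<le> B" "0 < N"
    using e(1) N by linarith+
  have step: "N * d + N \<le> N * d'" if "d < d'" for d d'
    using mult_left_mono[of "d + 1" d' N] that \<open>0 < N\<close> by (simp add: algebra_simps)
  have "N \<le> N * d1" "N * d1 + N \<le> N * d2" "N * d2 + N \<le> N * d3"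
    using step[of 0 d1] step[of d1 d2] step[of d2 d3] d by simp_all
  moreover have "N * d1 - B \<le> e1" "e1 \<le> N * d1 + B" "N * d2 - B \<le> e2" "e2 \<le> N * d2 + B"
    "N * d3 - B \<le> e3"
    using e by (simp_all add: abs_le_iff)
  ultimately show "0 < e1" "e1 < e2" "e2 < e3" "N \<le> 2 * e1"
    using N by - (linarith+)
qed

lemma perturbed_coeff_le:
  fixes k e1 e3 d3 B N :: int
  assumes "0 \<le> k" "k * e1 \<le> e3" "N \<le> 2 * e1" "e3 \<le> N * d3 + B" "0 \<le> B" "2 * B < N"
  shows "k \<le> 2 * d3"
proof -
  have "k * N \<le> k * (2 * e1)"
    using assms(3,1) by (rule mult_left_mono)
  also have "\<dots> < (2 * d3 + 1) * N"
    using assms(2,4,6) by (simp add: algebra_simps)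
  finally show ?thesis
    using assms(5,6) by (simp add: mult_less_cancel_right_pos)
qed

lemma min_gen_set_perturb:
  fixes d1 d2 d3 e1 e2 e3 B N :: int
  assumes d: "0 < d1" "d1 < d2" "d2 < d3" "min_gen_set {d1, d2, d3}"
    and e: "\<bar>e1 - N * d1\<bar> \<le> B" "\<bar>e2 - N * d2\<bar> \<le> B" "\<bar>e3 - N * d3\<bar> \<le> B"
    and N: "(4 * d3 + 1) * B < N"
  shows "min_gen_set {e1, e2, e3}"
proof -
  have "0 \<le> B"
    using e(1) by linarith
  moreover have "2 * B \<le> (4 * d3 + 1) * B"
    using \<open>0 \<le> B\<close> d by (intro mult_right_mono) auto
  ultimately have "2 * B < N" and dB: "0 \<le> d3 * B"
    using N d by simp_all
  note sorted = perturbed_sorted[OF d(1-3) e \<open>2 * B < N\<close>]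
  have coeff: "k \<le> 2 * d3" if "0 \<le> k" "k * e1 \<le> e3" for k
    using perturbed_coeff_le[OF that sorted(4) _ \<open>0 \<le> B\<close> \<open>2 * B < N\<close>] e(3) by (simp add: abs_le_iff)
  have d_gen: "\<forall>k\<ge>0. d2 \<noteq> k * d1" "\<forall>k\<ge>0. \<forall>l\<ge>0. d3 \<noteq> k * d1 + l * d2"
    using d min_gen_set_sorted_iff[of d1 d2 d3] by simp_all
  have "e2 \<noteq> k * e1" if "0 \<le> k" for k
  proof
    assume e2_eq: "e2 = k * e1"
    then have "k \<le> 2 * d3"
      using coeff that sorted(3) by simp
    have "N * (k * d1 - d2) = (e2 - N * d2) - k * (e1 - N * d1)"
      using e2_eq by (simp add: algebra_simps)
    also have "\<bar>\<dots>\<bar> < N"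
      using abs_triangle_ineq4[of "e2 - N * d2" "k * (e1 - N * d1)"]
        abs_mult_le[OF that \<open>k \<le> 2 * d3\<close> e(1)] e(2) N dB by (simp add: algebra_simps)
    finally have "d2 = k * d1"
      using eq_0_if_abs_mult_lt by fastforce
    with d_gen(1) that show False
      by blast
  qed
  moreover have "e3 \<noteq> k * e1 + l * e2" if "0 \<le> k" "0 \<le> l" for k l
  proof
    assume e3_eq: "e3 = k * e1 + l * e2"
    have "0 \<le> k * e1" "0 \<le> l * e2" "l * e1 \<le> l * e2"
      using that sorted by (simp_all add: mult_left_mono)
    then have "k \<le> 2 * d3" "l \<le> 2 * d3"
      using coeff[of k] coeff[of l] that e3_eq by simp_all
    have "N * (k * d1 + l * d2 - d3) = (e3 - N * d3) - k * (e1 - N * d1) - l * (e2 - N * d2)"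
      using e3_eq by (simp add: algebra_simps)
    also have "\<bar>\<dots>\<bar> < N"
      using abs_triangle_ineq4[of "e3 - N * d3 - k * (e1 - N * d1)" "l * (e2 - N * d2)"]
        abs_triangle_ineq4[of "e3 - N * d3" "k * (e1 - N * d1)"]
        abs_mult_le[OF that(1) \<open>k \<le> 2 * d3\<close> e(1)] abs_mult_le[OF that(2) \<open>l \<le> 2 * d3\<close> e(2)] e(3) N
      by (simp add: algebra_simps)
    finally have "d3 = k * d1 + l * d2"
      using eq_0_if_abs_mult_lt by fastforce
    with d_gen(2) that show False
      by blast
  qed
  ultimately show ?thesis
    using min_gen_set_sorted_iff[OF sorted(1-3)] by blast
qed

section \<open>The ratio \<open>K\<^sub>N\<^sub>,\<^sub>r\<close>\<close>

lemma coprime_linear_shift: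
  fixes d1 d2 :: int
  assumes "d1 \<noteq> 0"
  obtains u v where "\<And>N. coprime (N * d1 + u) (N * d2 + v)"
proof -
  define g k1 k2 where "g = gcd d1 d2" and "k1 = d1 div g" and "k2 = d2 div g"
  have d: "d1 = k1 * g" "d2 = k2 * g"
    unfolding g_def k1_def k2_def by simp_all
  have "coprime k1 k2"
    unfolding k1_def k2_def g_def using div_gcd_coprime assms by blast
  then obtain s t where st: "s * k1 + t * k2 = 1"
    using bezout_int[of k1 k2] by (auto simp: coprime_iff_gcd_eq_1)
  have "coprime (N * d1 + (- t)) (N * d2 + s)" for N
  proof (rule coprimeI)
    fix c
    assume "c dvd N * d1 + (- t)" "c dvd N * d2 + s"
    then have "c dvd k1 * (N * d2 + s) - k2 * (N * d1 + (- t))"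
      by (simp add: dvd_diff)
    also have "k1 * (N * d2 + s) - k2 * (N * d1 + (- t)) = 1"
      using st unfolding d by (simp add: algebra_simps)
    finally show "is_unit c" .
  qed
  then show thesis
    by (rule that)
qed

lemma mem_MNr_iff:
  "(e1, e2, e3) \<in> MNr d1 d2 d3 N \<rho> \<longleftrightarrow>
     \<bar>real_of_int (e1 - int N * d1)\<bar> \<le> \<rho> \<and> \<bar>real_of_int (e2 - int N * d2)\<bar> \<le> \<rho> \<and>
     \<bar>real_of_int (e3 - int N * d3)\<bar> \<le> \<rho> \<and> gcd e1 (gcd e2 e3) = 1 \<and> min_gen_set {e1, e2, e3}"
  unfolding MNr_def by auto

lemma finite_MNr: "finite (MNr d1 d2 d3 N \<rho>)"
proof -
  define R where "R = \<lceil>\<rho>\<rceil>"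
  have R: "\<bar>t\<bar> \<le> R" if "\<bar>real_of_int t\<bar> \<le> \<rho>" for t
    using that le_of_int_ceiling[of \<rho>] unfolding R_def by linarith
  have "MNr d1 d2 d3 N \<rho> \<subseteq> {int N * d1 - R..int N * d1 + R} \<times>
      {int N * d2 - R..int N * d2 + R} \<times> {int N * d3 - R..int N * d3 + R}"
  proof
    fix p
    assume p: "p \<in> MNr d1 d2 d3 N \<rho>"
    obtain e1 e2 e3 where p_eq: "p = (e1, e2, e3)"
      by (cases p)
    have "\<bar>e1 - int N * d1\<bar> \<le> R" "\<bar>e2 - int N * d2\<bar> \<le> R" "\<bar>e3 - int N * d3\<bar> \<le> R"
      using p R unfolding p_eq mem_MNr_iff by blast+
    then show "p \<in> {int N * d1 - R..int N * d1 + R} \<times>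
      {int N * d2 - R..int N * d2 + R} \<times> {int N * d3 - R..int N * d3 + R}"
      unfolding p_eq by (simp add: abs_le_iff)
  qed
  then show ?thesis
    by (rule finite_subset) simp
qed

lemma MNr_nonempty:
  fixes d1 d2 d3 :: int
  assumes "0 < d1" "d1 < d2" "d2 < d3" "min_gen_set {d1, d2, d3}"
  obtains B :: int where "\<And>N \<rho>. real_of_int B \<le> \<rho> \<Longrightarrow> (4 * d3 + 1) * B < int N \<Longrightarrow> MNr d1 d2 d3 N \<rho> \<noteq> {}"
proof -
  obtain u v where uv: "\<And>N. coprime (N * d1 + u) (N * d2 + v)"
    using coprime_linear_shift[of d1] assms(1) by auto
  define B where "B = max \<bar>u\<bar> \<bar>v\<bar>"
  have "(int N * d1 + u, int N * d2 + v, int N * d3) \<in> MNr d1 d2 d3 N \<rho>"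
    if "real_of_int B \<le> \<rho>" "(4 * d3 + 1) * B < int N" for N \<rho>
  proof -
    have "\<bar>u\<bar> \<le> B" "\<bar>v\<bar> \<le> B" "\<bar>0\<bar> \<le> B"
      unfolding B_def by auto
    then have "min_gen_set {int N * d1 + u, int N * d2 + v, int N * d3}"
      using min_gen_set_perturb[OF assms, of "int N * d1 + u" "int N" B "int N * d2 + v" "int N * d3"] that(2)
      by simp
    moreover have "gcd (int N * d1 + u) (gcd (int N * d2 + v) (int N * d3)) = 1"
      using uv[of "int N"] by (simp add: coprime_iff_gcd_eq_1 flip: gcd.assoc)
    moreover have "\<bar>real_of_int u\<bar> \<le> \<rho>" "\<bar>real_of_int v\<bar> \<le> \<rho>" "0 \<le> \<rho>"
      using \<open>\<bar>u\<bar> \<le> B\<close> \<open>\<bar>v\<bar> \<le> B\<close> \<open>\<bar>0\<bar> \<le> B\<close> that(1) by (simp_all flip: of_int_abs)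
    ultimately show ?thesis
      unfolding mem_MNr_iff by simp
  qed
  then show thesis
    using that by blast
qed

lemma sum_le_eps_sqrt_prod:
  fixes x y z n D \<epsilon> :: real
  assumes "n / 2 \<le> x" "n / 2 \<le> y" "n / 2 \<le> z" "x \<le> 2 * n * D" "y \<le> 2 * n * D" "z \<le> 2 * n * D"
    and "0 < n" "0 < \<epsilon>" "288 * D\<^sup>2 \<le> \<epsilon>\<^sup>2 * n"
  shows "x + y + z \<le> \<epsilon> * sqrt (x * y * z)"
proof -
  have "(x + y + z)\<^sup>2 \<le> (6 * n * D)\<^sup>2"
    using assms by (intro power_mono) auto
  also have "\<dots> = 36 * n\<^sup>2 * D\<^sup>2"
    by (simp add: power_mult_distrib)
  also have "\<dots> \<le> \<epsilon>\<^sup>2 * ((n / 2) * (n / 2) * (n / 2))"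
    using mult_left_mono[OF assms(9), of "n\<^sup>2"] by (simp add: power2_eq_square algebra_simps)
  also have "\<dots> \<le> \<epsilon>\<^sup>2 * (x * y * z)"
    using assms(1-3,7) by (intro mult_left_mono mult_mono) auto
  finally have "(x + y + z)\<^sup>2 \<le> \<epsilon>\<^sup>2 * (x * y * z)" .
  then have "x + y + z \<le> sqrt (\<epsilon>\<^sup>2 * (x * y * z))"
    by (rule real_le_rsqrt)
  also have "\<dots> = \<epsilon> * sqrt (x * y * z)"
    using assms(8) by (simp add: real_sqrt_mult)
  finally show ?thesis .
qed

lemma conductor3_ge_MNr:
  fixes d1 d2 d3 e1 e2 e3 :: int and \<rho> \<epsilon> :: real
  assumes d: "0 < d1" "d1 < d2" "d2 < d3" and e: "(e1, e2, e3) \<in> MNr d1 d2 d3 N \<rho>"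
    and N: "0 < N" "\<rho> \<le> real N / 2" and \<epsilon>: "0 < \<epsilon>" "288 * (real_of_int d3)\<^sup>2 \<le> \<epsilon>\<^sup>2 * real N"
  shows "0 < real_of_int (e1 * e2 * e3)"
    and "(sqrt 3 - \<epsilon>) * sqrt (real_of_int (e1 * e2 * e3)) \<le> real_of_int (conductor3 e1 e2 e3)"
proof -
  have step: "real N * d \<le> real N * d'" if "d \<le> d'" for d d' :: int
    using mult_left_mono[of "real_of_int d" "real_of_int d'" "real N"] that by simp
  have "real N \<le> real N * d1" "real N * d1 \<le> real N * d2" "real N * d2 \<le> real N * d3"
    using step[of 1 d1] step[of d1 d2] step[of d2 d3] d by simp_all
  moreover have "\<bar>e1 - real N * d1\<bar> \<le> \<rho>" "\<bar>e2 - real N * d2\<bar> \<le> \<rho>" "\<bar>e3 - real N * d3\<bar> \<le> \<rho>"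
    and gcd: "gcd e1 (gcd e2 e3) = 1"
    using e unfolding mem_MNr_iff by simp_all
  then have "e1 \<le> real N * d1 + \<rho>" "real N * d1 - \<rho> \<le> e1" "e2 \<le> real N * d2 + \<rho>"
    "real N * d2 - \<rho> \<le> e2" "e3 \<le> real N * d3 + \<rho>" "real N * d3 - \<rho> \<le> e3"
    by (simp_all add: abs_le_iff)
  ultimately have lower: "real N / 2 \<le> e1" "real N / 2 \<le> e2" "real N / 2 \<le> e3"
    and upper: "e1 \<le> 2 * real N * d3" "e2 \<le> 2 * real N * d3" "e3 \<le> 2 * real N * d3"
    using N by - (linarith+)
  moreover have "0 < real N"
    using N by simp
  ultimately have "0 < real_of_int e1" "0 < real_of_int e2" "0 < real_of_int e3"
    by - (linarith+)
  then have "0 < e1" "0 < e2" "0 < e3"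
    by simp_all
  then show "0 < real_of_int (e1 * e2 * e3)"
    by simp
  have "sqrt 3 * sqrt (real_of_int (e1 * e2 * e3)) \<le> real_of_int (conductor3 e1 e2 e3 + e1 + e2 + e3 - 1)"
    using conductor3_lower_bound[OF \<open>0 < e1\<close> \<open>0 < e2\<close> \<open>0 < e3\<close> gcd] by (simp add: real_sqrt_mult)
  moreover have "e1 + e2 + e3 \<le> \<epsilon> * sqrt (real_of_int (e1 * e2 * e3))"
    using sum_le_eps_sqrt_prod[OF lower upper _ \<epsilon>] N by simp
  ultimately show "(sqrt 3 - \<epsilon>) * sqrt (real_of_int (e1 * e2 * e3)) \<le> real_of_int (conductor3 e1 e2 e3)"
    by (simp add: algebra_simps)
qed

lemma le_sum_divide_sum:
  fixes f g :: "'a \<Rightarrow> real"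
  assumes "finite S" "S \<noteq> {}" "\<And>p. p \<in> S \<Longrightarrow> 0 < g p" "\<And>p. p \<in> S \<Longrightarrow> c * g p \<le> f p"
  shows "c \<le> sum f S / sum g S"
proof -
  have "0 < sum g S"
    using assms(1-3) by (rule sum_pos)
  moreover have "c * sum g S \<le> sum f S"
    unfolding sum_distrib_left using assms(4) by (rule sum_mono)
  ultimately show ?thesis
    by (simp add: pos_le_divide_eq)
qed

lemma KNr_ge:
  fixes d1 d2 d3 :: int and \<rho> \<epsilon> :: real
  assumes d: "0 < d1" "d1 < d2" "d2 < d3" and "MNr d1 d2 d3 N \<rho> \<noteq> {}"
    and N: "0 < N" "\<rho> \<le> real N / 2" and \<epsilon>: "0 < \<epsilon>" "288 * (real_of_int d3)\<^sup>2 \<le> \<epsilon>\<^sup>2 * real N"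
  shows "sqrt 3 - \<epsilon> \<le> KNr d1 d2 d3 N \<rho>"
  unfolding KNr_def
proof (rule le_sum_divide_sum[OF finite_MNr \<open>MNr d1 d2 d3 N \<rho> \<noteq> {}\<close>])
  fix p
  assume "p \<in> MNr d1 d2 d3 N \<rho>"
  moreover obtain e1 e2 e3 where "p = (e1, e2, e3)"
    by (cases p)
  ultimately show "0 < (case p of (e1, e2, e3) \<Rightarrow> sqrt (real_of_int (e1 * e2 * e3)))"
    and "(sqrt 3 - \<epsilon>) * (case p of (e1, e2, e3) \<Rightarrow> sqrt (real_of_int (e1 * e2 * e3)))
          \<le> (case p of (e1, e2, e3) \<Rightarrow> real_of_int (conductor3 e1 e2 e3))"
    using conductor3_ge_MNr[OF d _ N \<epsilon>] by simp_all
qed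

lemma ereal_le_Liminf_if_eventually:
  assumes "\<And>\<epsilon>. 0 < \<epsilon> \<Longrightarrow> eventually (\<lambda>x. L - \<epsilon> \<le> f x) F"
  shows "ereal L \<le> Liminf F (\<lambda>x. ereal (f x))"
  unfolding le_Liminf_iff
proof (intro allI impI)
  fix y
  assume "y < ereal L"
  then obtain t where t: "y < ereal t" "t < L"
    using ereal_dense2 by force
  have "eventually (\<lambda>x. t \<le> f x) F"
    using assms[of "L - t"] t(2) by simp
  then show "eventually (\<lambda>x. y < ereal (f x)) F"
    by eventually_elim (use t(1) in \<open>auto intro: order_less_le_trans\<close>)
qed

lemma eventually_KNr_ge:
  fixes d1 d2 d3 :: int and r :: "nat \<Rightarrow> real"
  assumes d: "0 < d1" "d1 < d2" "d2 < d3" "min_gen_set {d1, d2, d3}"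
    and r: "filterlim r at_top sequentially" "(\<lambda>N. r N / real N) \<longlonglongrightarrow> 0" and "0 < \<epsilon>"
  shows "eventually (\<lambda>N. sqrt 3 - \<epsilon> \<le> KNr d1 d2 d3 N (r N)) sequentially"
proof -
  obtain B where B: "\<And>N \<rho>. real_of_int B \<le> \<rho> \<Longrightarrow> (4 * d3 + 1) * B < int N \<Longrightarrow> MNr d1 d2 d3 N \<rho> \<noteq> {}"
    using MNr_nonempty[OF d] by blast
  have "eventually (\<lambda>N. r N / real N < 1 / 2) sequentially"
    using r(2) by (rule order_tendstoD) simp
  moreover have "eventually (\<lambda>N. 288 * (real_of_int d3)\<^sup>2 / \<epsilon>\<^sup>2 \<le> real N) sequentially"
    using filterlim_real_sequentially unfolding filterlim_at_top by blast
  moreover have "eventually (\<lambda>N. real_of_int B \<le> r N) sequentially"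
    using r(1) unfolding filterlim_at_top by blast
  moreover have "eventually (\<lambda>N. nat ((4 * d3 + 1) * B) < N) sequentially"
    by simp
  moreover have "eventually (\<lambda>N. 0 < N) sequentially"
    by simp
  ultimately show ?thesis
  proof eventually_elim
    case (elim N)
    then show ?case
      using KNr_ge[OF d(1-3) B] \<open>0 < \<epsilon>\<close>
      by (simp add: divide_less_eq pos_divide_le_eq mult.commute)
  qed
qed

theorem mainTheorem4:
  fixes d1 d2 d3 :: int and r :: "nat \<Rightarrow> real"
  assumes "0 < d1" and "d1 < d2" and "d2 < d3"
    and "gcd d1 (gcd d2 d3) = 1"
    and "min_gen_set {d1, d2, d3}"
    and "filterlim r at_top sequentially"
    and "(\<lambda>N. r N / real N) \<longlonglongrightarrow> 0"
  shows "Liminf sequentially (\<lambda>N. ereal (KNr d1 d2 d3 N (r N))) \<ge> ereal (sqrt 3)"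
  using eventually_KNr_ge[OF assms(1-3,5-7)] by (rule ereal_le_Liminf_if_eventually)

end
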